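(* Let $d\ge3$ and $k_d=d^2-1$. Let $M_\Sigma$ be the $(d-1)\times(d-1)$ lower-triangular matrix with entries, for $1\le i,j\le d-1$: $(M_\Sigma)_{ij}=0$ if $j>i$; $(M_\Sigma)_{i1}=\frac{2}{i(i+1)}$; $(M_\Sigma)_{ij}=\frac{1}{i(i+1)}$ if $1<j<i$; $(M_\Sigma)_{ii}=\frac{i}{i+1}$ if $i>1$. Let $M_{k_d}=M_\Sigma\oplus\mathbb{I}_{d(d-1)}$ (a $k_d\times k_d$ block-diagonal row-stochastic matrix). Then $\operatorname{rank}_{\mathrm{psd}}(M_{k_d})=d^2-1$.
   Context: The psd rank of a nonnegative $n\times m$ matrix $M$, $\operatorname{rank}_{\mathrm{psd}}(M)$, is the smallest $r$ such that there exist $r\times r$ positive semidefinite matrices $R_1,\dots,R_n$ and $C_1,\dots,C_m$ with $M_{ij}=\operatorname{Tr}(R_iC_j)$ for all $i,j$. *)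

theory Defs
  imports Complex_Main
begin

text \<open>Matrices are represented as functions nat \<Rightarrow> nat \<Rightarrow> real, indexed from 0,
  with explicit dimension bounds; entries outside the bounds are irrelevant.\<close>

definition psd_mat :: "nat \<Rightarrow> (nat \<Rightarrow> nat \<Rightarrow> real) \<Rightarrow> bool" where
  "psd_mat r A \<longleftrightarrow> (\<forall>i<r. \<forall>j<r. A i j = A j i) \<and>
     (\<forall>x :: nat \<Rightarrow> real. 0 \<le> (\<Sum>i<r. \<Sum>j<r. x i * A i j * x j))"

definition trace_prod :: "nat \<Rightarrow> (nat \<Rightarrow> nat \<Rightarrow> real) \<Rightarrow> (nat \<Rightarrow> nat \<Rightarrow> real) \<Rightarrow> real" where
  "trace_prod r A B = (\<Sum>i<r. \<Sum>j<r. A i j * B j i)"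

definition psd_factorization ::
  "nat \<Rightarrow> nat \<Rightarrow> (nat \<Rightarrow> nat \<Rightarrow> real) \<Rightarrow> nat \<Rightarrow> bool" where
  "psd_factorization n m M r \<longleftrightarrow>
     (\<exists>R C :: nat \<Rightarrow> nat \<Rightarrow> nat \<Rightarrow> real.
        (\<forall>i<n. psd_mat r (R i)) \<and> (\<forall>j<m. psd_mat r (C j)) \<and>
        (\<forall>i<n. \<forall>j<m. M i j = trace_prod r (R i) (C j)))"

definition psd_rank :: "nat \<Rightarrow> nat \<Rightarrow> (nat \<Rightarrow> nat \<Rightarrow> real) \<Rightarrow> nat" where
  "psd_rank n m M = (LEAST r. psd_factorization n m M r)"

text \<open>M_Sigma, 0-indexed: entry (i,j) is the paper's entry (i+1,j+1).\<close>
definition M_Sigma :: "nat \<Rightarrow> nat \<Rightarrow> real" where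
  "M_Sigma i j =
     (let a = real (i+1) in
      if j > i then 0
      else if j = 0 then 2 / (a * (a + 1))
      else if j < i then 1 / (a * (a + 1))
      else a / (a + 1))"

definition M_kd :: "nat \<Rightarrow> nat \<Rightarrow> nat \<Rightarrow> real" where
  "M_kd d i j =
     (if i < d - 1 \<and> j < d - 1 then M_Sigma i j
      else if i < d - 1 \<or> j < d - 1 then 0
      else if i = j then 1 else 0)"

end

theory Submission
  imports Defs "HOL-Library.Function_Algebras"
begin

text \<open>\<open>M\<^sub>k\<^sub>d\<close> is nonnegative and lower triangular with positive diagonal, and every such
  \<open>n \<times> n\<close> matrix has psd rank \<open>n\<close>. For any \<open>n \<times> n\<close> nonnegative matrix the factorization \<open>R\<^sub>i = e\<^sub>i e\<^sub>i\<^sup>T\<close>,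
  \<open>C\<^sub>j = diag(column j)\<close> shows that the psd rank is at most \<open>n\<close>. Conversely let \<open>M\<close> be
  lower triangular with positive diagonal and \<open>M\<^sub>i\<^sub>j = Tr(R\<^sub>i C\<^sub>j)\<close> with \<open>r \<times> r\<close> psd factors.
  Writing \<open>C\<^sub>j = \<Sum>\<^sub>k b\<^sub>j\<^sub>k b\<^sub>j\<^sub>k\<^sup>T\<close> (Cholesky) gives \<open>M\<^sub>i\<^sub>j = \<Sum>\<^sub>k b\<^sub>j\<^sub>k\<^sup>T R\<^sub>i b\<^sub>j\<^sub>k\<close>, a sum of
  nonnegative terms. Positivity of \<open>M\<^sub>j\<^sub>j\<close> yields some \<open>v\<^sub>j = b\<^sub>j\<^sub>k\<close> with \<open>R\<^sub>j v\<^sub>j \<noteq> 0\<close>, and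
  \<open>M\<^sub>i\<^sub>j = 0\<close> for \<open>i < j\<close> gives \<open>v\<^sub>j\<^sup>T R\<^sub>i v\<^sub>j = 0\<close>, hence \<open>R\<^sub>i v\<^sub>j = 0\<close> since \<open>R\<^sub>i\<close> is psd.
  This triangular pattern makes \<open>v\<^sub>1, \<dots>, v\<^sub>n\<close> linearly independent in \<open>\<real>\<^sup>r\<close>, so \<open>n \<le> r\<close>.\<close>

definition quad_form :: "nat \<Rightarrow> (nat \<Rightarrow> nat \<Rightarrow> real) \<Rightarrow> (nat \<Rightarrow> real) \<Rightarrow> real" where
  "quad_form r A x = (\<Sum>i<r. \<Sum>j<r. x i * A i j * x j)"

definition mat_vec :: "nat \<Rightarrow> (nat \<Rightarrow> nat \<Rightarrow> real) \<Rightarrow> (nat \<Rightarrow> real) \<Rightarrow> nat \<Rightarrow> real" where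
  "mat_vec r A x i = (\<Sum>j<r. A i j * x j)"

lemma psd_mat_iff_quad_form:
  "psd_mat r A \<longleftrightarrow> (\<forall>i<r. \<forall>j<r. A i j = A j i) \<and> (\<forall>x. 0 \<le> quad_form r A x)"
  by (simp add: psd_mat_def quad_form_def)

lemma psd_mat_symmetric: "psd_mat r A \<Longrightarrow> i < r \<Longrightarrow> j < r \<Longrightarrow> A i j = A j i"
  by (simp add: psd_mat_def)

lemma quad_form_nonneg: "psd_mat r A \<Longrightarrow> 0 \<le> quad_form r A x"
  by (simp add: psd_mat_iff_quad_form)

lemma quad_form_cong: "(\<And>i. i < r \<Longrightarrow> x i = y i) \<Longrightarrow> quad_form r A x = quad_form r A y"
  unfolding quad_form_def by (intro sum.cong refl) auto

lemma quad_form_mat_vec: "quad_form r A x = (\<Sum>i<r. x i * mat_vec r A x i)"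
  unfolding quad_form_def mat_vec_def by (simp add: sum_distrib_left mult.assoc)

lemma quad_form_Suc:
  "quad_form (Suc r) A x = quad_form r A x + x r * (\<Sum>j<r. A r j * x j)
     + (\<Sum>i<r. x i * A i r) * x r + x r * A r r * x r"
  by (simp add: quad_form_def sum.distrib sum_distrib_left sum_distrib_right algebra_simps)

lemma quad_form_add_scaled:
  assumes "\<And>i j. i < r \<Longrightarrow> j < r \<Longrightarrow> A i j = A j i"
  shows "quad_form r A (\<lambda>i. x i + t * y i) =
    quad_form r A x + 2 * t * (\<Sum>i<r. y i * mat_vec r A x i) + t\<^sup>2 * quad_form r A y"
proof -
  have "(\<Sum>i<r. \<Sum>j<r. x i * A i j * y j) = (\<Sum>j<r. \<Sum>i<r. x i * A i j * y j)"
    by (rule sum.swap)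
  also have "\<dots> = (\<Sum>j<r. y j * mat_vec r A x j)"
    by (simp add: mat_vec_def sum_distrib_left assms mult.commute mult.left_commute)
  finally have "(\<Sum>i<r. \<Sum>j<r. x i * A i j * y j) = (\<Sum>i<r. y i * mat_vec r A x i)" .
  moreover have "(\<Sum>i<r. \<Sum>j<r. y i * A i j * x j) = (\<Sum>i<r. y i * mat_vec r A x i)"
    by (simp add: mat_vec_def sum_distrib_left mult.assoc)
  moreover have "quad_form r A (\<lambda>i. x i + t * y i) = quad_form r A x
      + t * ((\<Sum>i<r. \<Sum>j<r. y i * A i j * x j) + (\<Sum>i<r. \<Sum>j<r. x i * A i j * y j))
      + t\<^sup>2 * quad_form r A y"
    unfolding quad_form_def
    by (simp add: algebra_simps power2_eq_square sum.distrib sum_distrib_left)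
  ultimately show ?thesis by simp
qed

lemma linear_coeff_zero_if_quadratic_nonneg:
  fixes b c :: real
  assumes "c \<ge> 0" "\<And>t. 0 \<le> 2 * t * b + t\<^sup>2 * c"
  shows "b = 0"
proof -
  define t where "t = - b / (c + 1)"
  have "0 \<le> (2 * t * b + t\<^sup>2 * c) * (c + 1)\<^sup>2" using assms by simp
  also have "\<dots> = 2 * (t * (c + 1)) * b * (c + 1) + (t * (c + 1))\<^sup>2 * c"
    by (simp add: algebra_simps power2_eq_square)
  also have "t * (c + 1) = - b" unfolding t_def using assms(1) by simp
  finally have "0 \<le> - (b\<^sup>2 * (c + 2))" by (simp add: algebra_simps power2_eq_square)
  with assms(1) have "b\<^sup>2 \<le> 0" by (simp add: mult_le_0_iff)
  thus ?thesis by simp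
qed

text \<open>Expanding \<open>q(x + t A x) \<ge> 0\<close> with \<open>q(x) = 0\<close> forces the linear coefficient \<open>|A x|\<^sup>2\<close> to vanish.\<close>

lemma psd_quad_form_zero_imp_mat_vec_zero:
  assumes psd: "psd_mat r A" and zero: "quad_form r A x = 0" and "i < r"
  shows "mat_vec r A x i = 0"
proof -
  define y where "y = mat_vec r A x"
  have "0 \<le> 2 * t * (\<Sum>i<r. y i * y i) + t\<^sup>2 * quad_form r A y" for t
    using quad_form_nonneg[OF psd, of "\<lambda>i. x i + t * y i"] zero
    by (simp add: quad_form_add_scaled psd_mat_symmetric[OF psd] y_def)
  then have "(\<Sum>i<r. y i * y i) = 0"
    using linear_coeff_zero_if_quadratic_nonneg quad_form_nonneg[OF psd] by blast
  with \<open>i < r\<close> have "y i * y i = 0" by (subst (asm) sum_nonneg_eq_0_iff) auto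
  thus ?thesis by (simp add: y_def)
qed

lemma psd_mat_Suc_imp_psd_mat:
  assumes "psd_mat (Suc r) C"
  shows "psd_mat r C"
  unfolding psd_mat_iff_quad_form
proof (intro conjI allI impI)
  fix i j assume "i < r" "j < r"
  then show "C i j = C j i" using psd_mat_symmetric[OF assms] by simp
next
  fix x
  have "quad_form r C x = quad_form r C (x(r := 0))" by (rule quad_form_cong) simp
  also have "\<dots> = quad_form (Suc r) C (x(r := 0))" by (simp add: quad_form_Suc)
  also have "\<dots> \<ge> 0" using assms by (rule quad_form_nonneg)
  finally show "0 \<le> quad_form r C x" .
qed

lemma mat_vec_unit: "k < r \<Longrightarrow> mat_vec r C (\<lambda>j. if j = k then 1 else 0) i = C i k"
  by (simp add: mat_vec_def if_distrib[of "\<lambda>c. _ * c"] cong: if_cong)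

lemma quad_form_unit: "k < r \<Longrightarrow> quad_form r C (\<lambda>j. if j = k then 1 else 0) = C k k"
  by (simp add: quad_form_mat_vec mat_vec_unit if_distrib[of "\<lambda>c. c * _"] cong: if_cong)

lemma psd_mat_diagonal_nonneg: "psd_mat r C \<Longrightarrow> k < r \<Longrightarrow> 0 \<le> C k k"
  using quad_form_nonneg quad_form_unit by metis

lemma psd_mat_zero_diagonal_imp_zero_column:
  assumes "psd_mat r C" "k < r" "C k k = 0" "i < r"
  shows "C i k = 0"
  using psd_quad_form_zero_imp_mat_vec_zero[OF assms(1), of "\<lambda>j. if j = k then 1 else 0" i]
  by (simp add: assms quad_form_unit mat_vec_unit)

text \<open>When \<open>C r r = 0\<close> the complement degenerates to \<open>C\<close> itself, as division by zero yields zero.\<close>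

lemma psd_mat_schur_complement:
  assumes psd: "psd_mat (Suc r) C"
  shows "psd_mat r (\<lambda>i j. C i j - C i r * C r j / C r r)"
proof (cases "C r r = 0")
  case True
  then show ?thesis using psd_mat_Suc_imp_psd_mat[OF psd] by simp
next
  case False
  define a where "a = C r r"
  have sym: "\<And>i j. i < Suc r \<Longrightarrow> j < Suc r \<Longrightarrow> C i j = C j i"
    using psd_mat_symmetric[OF psd] by blast
  show ?thesis
    unfolding psd_mat_iff_quad_form a_def[symmetric]
  proof (intro conjI allI impI)
    fix i j assume "i < r" "j < r"
    then show "C i j - C i r * C r j / a = C j i - C j r * C r i / a" using sym by simp
  next
    fix x
    define s where "s = (\<Sum>j<r. C r j * x j)"
    have row: "(\<Sum>i<r. x i * C i r) = s"
      unfolding s_def by (intro sum.cong refl) (simp add: sym mult.commute)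
    define x' where "x' = x(r := - s / a)"
    have "quad_form r C x' = quad_form r C x" unfolding x'_def by (rule quad_form_cong) simp
    moreover have "(\<Sum>j<r. C r j * x' j) = s" unfolding s_def x'_def by (intro sum.cong refl) simp
    moreover have "(\<Sum>i<r. x' i * C i r) = s" using row unfolding x'_def by simp
    ultimately have "quad_form (Suc r) C x' = quad_form r C x - s * s / a"
      using False by (simp add: quad_form_Suc x'_def a_def[symmetric] field_simps)
    moreover have "quad_form r (\<lambda>i j. C i j - C i r * C r j / a) x = quad_form r C x - s * s / a"
    proof -
      have "(\<Sum>i<r. \<Sum>j<r. x i * (C i r * C r j / a) * x j) = (\<Sum>i<r. x i * C i r) * s / a"
        unfolding s_def
        by (simp add: sum_distrib_left sum_distrib_right sum_divide_distrib mult.assoc) (rule sum.swap)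
      then show ?thesis
        unfolding quad_form_def row by (simp add: algebra_simps sum_subtractf)
    qed
    ultimately show "0 \<le> quad_form r (\<lambda>i j. C i j - C i r * C r j / a) x"
      using quad_form_nonneg[OF psd, of x'] by simp
  qed
qed

lemma psd_mat_gram:
  "psd_mat r C \<Longrightarrow> \<exists>B. \<forall>i<r. \<forall>j<r. C i j = (\<Sum>k<r. B k i * B k j)"
proof (induction r arbitrary: C)
  case 0
  show ?case by simp
next
  case (Suc r)
  define a where "a = C r r"
  have sym: "\<And>i j. i < Suc r \<Longrightarrow> j < Suc r \<Longrightarrow> C i j = C j i"
    using psd_mat_symmetric[OF Suc.prems] by blast
  have zero_row: "C r i = 0" if "a = 0" "i < Suc r" for i
    using psd_mat_zero_diagonal_imp_zero_column[OF Suc.prems, of r i] sym[of r i] that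
    by (simp add: a_def)
  have outer: "C i j = C r i * C r j / a" if "i = r \<or> j = r" "i < Suc r" "j < Suc r" for i j
    using that zero_row[of i] zero_row[of j] sym[of i r] by (cases "a = 0") (auto simp: a_def)
  obtain B' where B': "\<forall>i<r. \<forall>j<r. C i j - C i r * C r j / a = (\<Sum>k<r. B' k i * B' k j)"
    using Suc.IH[OF psd_mat_schur_complement[OF Suc.prems]] unfolding a_def by blast
  define B where "B k i = (if k < r then if i < r then B' k i else 0 else C r i / sqrt a)" for k i
  have a_nonneg: "a \<ge> 0" using psd_mat_diagonal_nonneg[OF Suc.prems] by (simp add: a_def)
  show ?case
  proof (intro exI allI impI)
    fix i j assume i: "i < Suc r" and j: "j < Suc r"
    have "B r i * B r j = C r i * C r j / a"
      using a_nonneg by (simp add: B_def real_sqrt_mult[symmetric])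
    then have sum_B: "(\<Sum>k<Suc r. B k i * B k j) =
        (if i < r \<and> j < r then C i j - C i r * C r j / a else 0) + C r i * C r j / a"
      using B' by (auto simp: B_def)
    show "C i j = (\<Sum>k<Suc r. B k i * B k j)"
      using outer[OF _ i j] sym[OF i, of r] i j unfolding sum_B by auto
  qed
qed

lemma trace_prod_gram:
  assumes "\<forall>i<r. \<forall>j<r. C i j = (\<Sum>k<r. B k i * B k j)"
  shows "trace_prod r R C = (\<Sum>k<r. quad_form r R (B k))"
proof -
  have "trace_prod r R C = (\<Sum>i<r. \<Sum>j<r. \<Sum>k<r. B k i * R i j * B k j)"
    unfolding trace_prod_def using assms
    by (auto simp: sum_distrib_left algebra_simps intro!: sum.cong)
  also have "\<dots> = (\<Sum>i<r. \<Sum>k<r. \<Sum>j<r. B k i * R i j * B k j)"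
    by (rule sum.cong[OF refl], rule sum.swap)
  also have "\<dots> = (\<Sum>k<r. quad_form r R (B k))"
    unfolding quad_form_def by (rule sum.swap)
  finally show ?thesis .
qed

lemma sum_fun_apply: "sum f A x = (\<Sum>a\<in>A. f a x)"
  by (induction A rule: infinite_finite_induct) auto

interpretation real_fun: vector_space "\<lambda>(c::real) (f::nat \<Rightarrow> real) k. c * f k"
  by unfold_locales (auto simp: fun_eq_iff algebra_simps)

lemma independent_coeffs_card_le:
  fixes v :: "nat \<Rightarrow> nat \<Rightarrow> real"
  assumes indep: "\<forall>c. (\<forall>b<r. (\<Sum>j<n. c j * v j b) = 0) \<longrightarrow> (\<forall>j<n. c j = 0)"
  shows "n \<le> r"
proof -
  define w where "w j b = (if b < r then v j b else 0)" for j b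
  define e where "e k b = (if b = k then 1 else 0 :: real)" for k b :: nat
  have w_indep: "c j = 0" if "(\<Sum>j<n. (\<lambda>b. c j * w j b)) = 0" "j < n" for c j
  proof -
    have "(\<Sum>j<n. c j * v j b) = 0" if "b < r" for b
      using fun_cong[OF \<open>(\<Sum>j<n. (\<lambda>b. c j * w j b)) = 0\<close>, of b] that
      by (simp add: sum_fun_apply w_def)
    then show ?thesis using indep \<open>j < n\<close> by blast
  qed
  have inj: "inj_on w {..<n}"
  proof (rule inj_onI, rule ccontr)
    fix a b assume ab: "a \<in> {..<n}" "b \<in> {..<n}" "w a = w b" "a \<noteq> b"
    define c where "c j = (if j = a then 1 else if j = b then -1 else 0 :: real)" for j
    have "(\<Sum>j<n. c j * w j x) = (\<Sum>j<n. (if j = a then w a x else 0) - (if j = b then w b x else 0))"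
      for x using ab by (intro sum.cong) (auto simp: c_def)
    then have "(\<Sum>j<n. (\<lambda>x. c j * w j x)) = (\<lambda>x. w a x - w b x)"
      using ab by (simp add: fun_eq_iff sum_fun_apply sum_subtractf)
    with ab(3) have "c a = 0" by (intro w_indep) (use ab in auto)
    then show False by (simp add: c_def)
  qed
  have "real_fun.independent (w ` {..<n})"
  proof (rule real_fun.independent_if_scalars_zero)
    fix f x assume "(\<Sum>y\<in>w ` {..<n}. (\<lambda>b. f y * y b)) = 0" "x \<in> w ` {..<n}"
    then show "f x = 0" using w_indep[of "f \<circ> w"] by (auto simp: sum.reindex[OF inj])
  qed simp
  moreover have "w ` {..<n} \<subseteq> real_fun.span (e ` {..<r})"
  proof (rule image_subsetI)
    fix j
    have "w j = (\<Sum>k<r. (\<lambda>b. w j k * e k b))"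
      by (auto simp: fun_eq_iff sum_fun_apply e_def w_def
          if_distrib[of "\<lambda>c. _ * c"] cong: if_cong)
    also have "\<dots> \<in> real_fun.span (e ` {..<r})"
      by (intro real_fun.span_sum real_fun.span_scale real_fun.span_base) auto
    finally show "w j \<in> real_fun.span (e ` {..<r})" .
  qed
  ultimately have "card (w ` {..<n}) \<le> card (e ` {..<r})"
    using real_fun.independent_span_bound by blast
  also have "\<dots> \<le> r" using card_image_le[of "{..<r}" e] by simp
  finally show ?thesis using card_image[OF inj] by simp
qed

text \<open>The first nonzero coefficient \<open>c\<^sub>i\<close> survives when \<open>R\<^sub>i\<close> is applied to \<open>\<Sum>\<^sub>j c\<^sub>j v\<^sub>j = 0\<close>.\<close>

lemma triangular_kernel_imp_independent:
  fixes R :: "nat \<Rightarrow> nat \<Rightarrow> nat \<Rightarrow> real" and v :: "nat \<Rightarrow> nat \<Rightarrow> real"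
  assumes zero: "\<And>i j l. i < j \<Longrightarrow> j < n \<Longrightarrow> l < r \<Longrightarrow> mat_vec r (R i) (v j) l = 0"
    and nonzero: "\<And>i. i < n \<Longrightarrow> \<exists>l<r. mat_vec r (R i) (v i) l \<noteq> 0"
  shows "\<forall>c. (\<forall>b<r. (\<Sum>j<n. c j * v j b) = 0) \<longrightarrow> (\<forall>j<n. c j = 0)"
proof (intro allI impI, rule ccontr)
  fix c j assume comb: "\<forall>b<r. (\<Sum>j<n. c j * v j b) = 0" and "j < n" "c j \<noteq> 0"
  then obtain i where i: "i < n" "c i \<noteq> 0" and below: "\<And>j. j < i \<Longrightarrow> c j = 0"
    using exists_least_iff[of "\<lambda>j. j < n \<and> c j \<noteq> 0"] by (auto intro: less_trans)
  obtain l where l: "l < r" "mat_vec r (R i) (v i) l \<noteq> 0" using nonzero[OF i(1)] by blast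
  have "0 = (\<Sum>b<r. R i l b * (\<Sum>j<n. c j * v j b))" by (simp add: comb)
  also have "\<dots> = (\<Sum>j<n. c j * mat_vec r (R i) (v j) l)"
    by (simp add: mat_vec_def sum_distrib_left algebra_simps) (rule sum.swap)
  also have "\<dots> = (\<Sum>j<n. if j = i then c i * mat_vec r (R i) (v i) l else 0)"
    using below zero[of i _ l] l(1)
    by (intro sum.cong refl) (metis lessThan_iff linorder_neqE_nat mult_eq_0_iff)
  also have "\<dots> = c i * mat_vec r (R i) (v i) l" using i(1) by simp
  finally show False using i(2) l(2) by simp
qed

lemma psd_factorization_triangular_ge:
  assumes upper_zero: "\<And>i j. i < j \<Longrightarrow> j < n \<Longrightarrow> M i j = 0"
    and diagonal_pos: "\<And>i. i < n \<Longrightarrow> 0 < M i i"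
    and "psd_factorization n n M r"
  shows "n \<le> r"
proof -
  obtain R C where R: "\<forall>i<n. psd_mat r (R i)" and C: "\<forall>j<n. psd_mat r (C j)"
    and M: "\<forall>i<n. \<forall>j<n. M i j = trace_prod r (R i) (C j)"
    using \<open>psd_factorization n n M r\<close> unfolding psd_factorization_def by blast
  have "\<exists>B. \<forall>a<r. \<forall>b<r. C j a b = (\<Sum>k<r. B k a * B k b)" if "j < n" for j
    using psd_mat_gram C that by blast
  then obtain B where B: "\<And>j. j < n \<Longrightarrow> \<forall>a<r. \<forall>b<r. C j a b = (\<Sum>k<r. B j k a * B j k b)"
    by metis
  have M_sum: "M i j = (\<Sum>k<r. quad_form r (R i) (B j k))" if "i < n" "j < n" for i j
    using M trace_prod_gram[OF B[OF \<open>j < n\<close>]] that by simp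
  have "\<exists>k<r. 0 < quad_form r (R i) (B i k)" if "i < n" for i
  proof (rule ccontr)
    assume "\<not> ?thesis"
    then have "(\<Sum>k<r. quad_form r (R i) (B i k)) \<le> 0" by (intro sum_nonpos) auto
    with diagonal_pos[OF that] M_sum[OF that that] show False by simp
  qed
  then obtain k where k: "\<And>i. i < n \<Longrightarrow> k i < r \<and> 0 < quad_form r (R i) (B i (k i))"
    by metis
  define v where "v i = B i (k i)" for i
  show ?thesis
  proof (rule independent_coeffs_card_le[OF triangular_kernel_imp_independent])
    fix i j l assume "i < j" "j < n" "l < r"
    then have i: "i < n" by simp
    have "(\<Sum>k<r. quad_form r (R i) (B j k)) = 0"
      using M_sum[OF i \<open>j < n\<close>] upper_zero[OF \<open>i < j\<close> \<open>j < n\<close>] by simp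
    then have "quad_form r (R i) (v j) = 0"
      using k[OF \<open>j < n\<close>] R i quad_form_nonneg unfolding v_def
      by (subst (asm) sum_nonneg_eq_0_iff) auto
    then show "mat_vec r (R i) (v j) l = 0"
      using psd_quad_form_zero_imp_mat_vec_zero R i \<open>l < r\<close> by blast
  next
    fix i assume "i < n"
    show "\<exists>l<r. mat_vec r (R i) (v i) l \<noteq> 0"
    proof (rule ccontr)
      assume "\<not> ?thesis"
      then have "quad_form r (R i) (v i) = 0" by (simp add: quad_form_mat_vec)
      with k[OF \<open>i < n\<close>] show False by (simp add: v_def)
    qed
  qed
qed

lemma psd_factorization_diagonal:
  assumes nonneg: "\<And>i j. i < n \<Longrightarrow> j < n \<Longrightarrow> 0 \<le> M i j"
  shows "psd_factorization n n M n"
proof -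
  define R where "R i a b = (if a = i \<and> b = i then 1 else 0 :: real)" for i a b :: nat
  define C where "C j a b = (if a = b then M a j else 0)" for j a b :: nat
  have weighted_square_nonneg: "0 \<le> y * m * y" if "0 \<le> m" for y m :: real
    using that by (metis mult.commute mult.assoc mult_nonneg_nonneg zero_le_square)
  then have "psd_mat n (C j)" if "j < n" for j
    unfolding psd_mat_def C_def using nonneg that by (auto intro!: sum_nonneg)
  moreover have "psd_mat n (R i)" for i
    unfolding psd_mat_def R_def by (auto intro!: sum_nonneg)
  moreover have "M i j = trace_prod n (R i) (C j)" if "i < n" for i j
  proof -
    have "R i a b * C j b a = (if b = i then if a = i then M i j else 0 else 0)" for a b
      by (auto simp: R_def C_def)
    with \<open>i < n\<close> show ?thesis by (simp add: trace_prod_def)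
  qed
  ultimately show ?thesis unfolding psd_factorization_def by blast
qed

lemma psd_rank_triangular:
  assumes "\<And>i j. i < n \<Longrightarrow> j < n \<Longrightarrow> 0 \<le> M i j"
    and "\<And>i j. i < j \<Longrightarrow> j < n \<Longrightarrow> M i j = 0"
    and "\<And>i. i < n \<Longrightarrow> 0 < M i i"
  shows "psd_rank n n M = n"
  unfolding psd_rank_def
proof (rule Least_equality)
  show "psd_factorization n n M n" using assms(1) by (rule psd_factorization_diagonal)
next
  fix r assume "psd_factorization n n M r"
  with assms(2,3) show "n \<le> r" by (rule psd_factorization_triangular_ge)
qed

lemma M_kd_nonneg: "0 \<le> M_kd d i j"
  by (simp add: M_kd_def M_Sigma_def Let_def add_nonneg_pos)

lemma M_kd_upper_zero: "i < j \<Longrightarrow> M_kd d i j = 0"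
  by (auto simp: M_kd_def M_Sigma_def)

lemma M_kd_diagonal_pos: "0 < M_kd d i i"
  by (simp add: M_kd_def M_Sigma_def Let_def add_pos_pos)

theorem mainTheorem11:
  fixes d :: nat
  assumes "d \<ge> 3"
  shows "psd_rank (d^2 - 1) (d^2 - 1) (M_kd d) = d^2 - 1"
  by (rule psd_rank_triangular) (simp_all add: M_kd_nonneg M_kd_upper_zero M_kd_diagonal_pos)

end
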